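(* Let $P$ be a set of $n\geq 5$ points in general position in the plane and let $\mathcal{P}$ be the set of all closed segments with both endpoints in $P$. If $\mathcal{P}$ has a good-2-set, then $\mu(D(P))\geq\binom{n}{2}-8$.
   Context: General position means no three points collinear. Two segments cross if they meet in a single point interior to both; a segment is clean in $\mathcal{P}$ if no other segment of $\mathcal{P}$ crosses it. For disjoint segments $uv,xy\in\mathcal{P}$ let $\mathcal{D}(uv,xy):=\{uv,ux,uy,vx,vy,xy\}$ (a drawing of $K_4$); the two segments of $\{ux,uy,vx,vy\}$ lying in the interior of the convex hull of $\mathcal{D}(uv,xy)$ are its diagonals. $\mathcal{D}(uv,xy)$ is a good-2-set of $\mathcal{P}$ if: $uv$ and $xy$ are clean in $\mathcal{P}$; each of $uv$ and $xy$ has at least one endpoint on the boundary of the convex hull of $P$; and, letting $L$ and $R$ be the two opposite quadrants of the plane determined by the lines spanned by the two diagonals that are internally disjoint from $uv$ and $xy$, the interior of $L$ (resp. $R$) contains a segment $e_l$ (resp. $e_r$) of $\mathcal{P}$ not crossed by any segment of $\mathcal{P}\setminus\mathcal{D}(uv,xy)$. $D(P)$ is the graph with vertex set $\mathcal{P}$, two segments adjacent iff disjoint. For a graph $G$ and $U\subseteq V(G)$, two distinct vertices $x,y\in U$ are $U$-mutually visible if $G$ contains a shortest $x$-$y$ path none of whose internal vertices lies in $U$; $U$ is a mutual-visibility set if every two distinct vertices of $U$ are $U$-mutually visible. $\mu(G)$ is the maximum size of a mutual-visibility set of $G$. *)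

theory Defs
  imports "HOL-Analysis.Analysis"
begin

type_synonym pt = "real \<times> real"

definition gen_pos :: "pt set \<Rightarrow> bool" where
  "gen_pos P \<longleftrightarrow> (\<forall>a\<in>P. \<forall>b\<in>P. \<forall>c\<in>P.
      a \<noteq> b \<and> b \<noteq> c \<and> a \<noteq> c \<longrightarrow> \<not> collinear {a, b, c})"

text \<open>A segment is represented by its set of two endpoints; the closed geometric
  segment is its convex hull, and its relative interior is the hull minus the endpoints.\<close>
definition segs :: "pt set \<Rightarrow> pt set set" where
  "segs P = {{u, v} | u v. u \<in> P \<and> v \<in> P \<and> u \<noteq> v}"

definition seg_interior :: "pt set \<Rightarrow> pt set" where
  "seg_interior s = convex hull s - s"

definition crosses :: "pt set \<Rightarrow> pt set \<Rightarrow> bool" where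
  "crosses s t \<longleftrightarrow> (\<exists>p. convex hull s \<inter> convex hull t = {p} \<and> p \<notin> s \<and> p \<notin> t)"

definition clean :: "pt set set \<Rightarrow> pt set \<Rightarrow> bool" where
  "clean PP s \<longleftrightarrow> \<not> (\<exists>t\<in>PP. t \<noteq> s \<and> crosses t s)"

definition seg_disjoint :: "pt set \<Rightarrow> pt set \<Rightarrow> bool" where
  "seg_disjoint s t \<longleftrightarrow> convex hull s \<inter> convex hull t = {}"

definition Dset :: "pt \<Rightarrow> pt \<Rightarrow> pt \<Rightarrow> pt \<Rightarrow> pt set set" where
  "Dset u v x y = {{u, v}, {u, x}, {u, y}, {v, x}, {v, y}, {x, y}}"

definition is_diag :: "pt \<Rightarrow> pt \<Rightarrow> pt \<Rightarrow> pt \<Rightarrow> pt set \<Rightarrow> bool" where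
  "is_diag u v x y d \<longleftrightarrow> d \<in> {{u, x}, {u, y}, {v, x}, {v, y}} \<and>
     seg_interior d \<subseteq> interior (convex hull {u, v, x, y})"

definition cr :: "pt \<Rightarrow> pt \<Rightarrow> real" where
  "cr p q = fst p * snd q - snd p * fst q"

text \<open>Open quadrant determined by the lines through a,b and through c,e, with sign
  pattern (s1,s2) (i.e. the interior of a quadrant).\<close>
definition quad :: "pt \<Rightarrow> pt \<Rightarrow> pt \<Rightarrow> pt \<Rightarrow> real \<Rightarrow> real \<Rightarrow> pt set" where
  "quad a b c e s1 s2 = {p. 0 < s1 * cr (b - a) (p - a) \<and> 0 < s2 * cr (e - c) (p - c)}"

definition good2set :: "pt set \<Rightarrow> pt \<Rightarrow> pt \<Rightarrow> pt \<Rightarrow> pt \<Rightarrow> bool" where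
  "good2set P u v x y \<longleftrightarrow>
     {u, v} \<in> segs P \<and> {x, y} \<in> segs P \<and> seg_disjoint {u, v} {x, y} \<and>
     clean (segs P) {u, v} \<and> clean (segs P) {x, y} \<and>
     (u \<in> frontier (convex hull P) \<or> v \<in> frontier (convex hull P)) \<and>
     (x \<in> frontier (convex hull P) \<or> y \<in> frontier (convex hull P)) \<and>
     (\<exists>a b c e s1 s2. a \<noteq> b \<and> c \<noteq> e \<and> {a, b} \<noteq> {c, e} \<and>
        is_diag u v x y {a, b} \<and> is_diag u v x y {c, e} \<and>
        s1 \<in> {-1, 1} \<and> s2 \<in> {-1, 1} \<and>
        quad a b c e s1 s2 \<inter> (seg_interior {u, v} \<union> seg_interior {x, y}) = {} \<and>
        quad a b c e (-s1) (-s2) \<inter> (seg_interior {u, v} \<union> seg_interior {x, y}) = {} \<and>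
        (\<exists>el\<in>segs P. convex hull el \<subseteq> quad a b c e s1 s2 \<and>
            (\<forall>t\<in>segs P - Dset u v x y. \<not> crosses t el)) \<and>
        (\<exists>er\<in>segs P. convex hull er \<subseteq> quad a b c e (-s1) (-s2) \<and>
            (\<forall>t\<in>segs P - Dset u v x y. \<not> crosses t er)))"

definition walk :: "'v set \<Rightarrow> ('v \<Rightarrow> 'v \<Rightarrow> bool) \<Rightarrow> 'v list \<Rightarrow> bool" where
  "walk V E xs \<longleftrightarrow> xs \<noteq> [] \<and> set xs \<subseteq> V \<and>
     (\<forall>i. Suc i < length xs \<longrightarrow> E (xs ! i) (xs ! Suc i))"

definition shortest_path :: "'v set \<Rightarrow> ('v \<Rightarrow> 'v \<Rightarrow> bool) \<Rightarrow> 'v \<Rightarrow> 'v \<Rightarrow> 'v list \<Rightarrow> bool" where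
  "shortest_path V E x y xs \<longleftrightarrow> walk V E xs \<and> hd xs = x \<and> last xs = y \<and>
     (\<forall>ys. walk V E ys \<and> hd ys = x \<and> last ys = y \<longrightarrow> length xs \<le> length ys)"

definition mutually_visible :: "'v set \<Rightarrow> ('v \<Rightarrow> 'v \<Rightarrow> bool) \<Rightarrow> 'v set \<Rightarrow> 'v \<Rightarrow> 'v \<Rightarrow> bool" where
  "mutually_visible V E U x y \<longleftrightarrow>
     (\<exists>xs. shortest_path V E x y xs \<and> set (butlast (tl xs)) \<inter> U = {})"

definition mv_set :: "'v set \<Rightarrow> ('v \<Rightarrow> 'v \<Rightarrow> bool) \<Rightarrow> 'v set \<Rightarrow> bool" where
  "mv_set V E U \<longleftrightarrow> U \<subseteq> V \<and> (\<forall>x\<in>U. \<forall>y\<in>U. x \<noteq> y \<longrightarrow> mutually_visible V E U x y)"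

definition mu :: "'v set \<Rightarrow> ('v \<Rightarrow> 'v \<Rightarrow> bool) \<Rightarrow> nat" where
  "mu V E = Max (card ` {U. mv_set V E U})"

end

(* The segments outside S, the six segments of D(uv,xy) together with e_l and e_r, form a
   mutual-visibility set of D(P) of size at least (n choose 2) - 8: any two of them are either
   disjoint or have a common disjoint neighbour in S.
   Suppose s and t are not disjoint and each of uv, xy, e_l, e_r meets s or t. Since none of these
   four is crossed by s or t, general position makes each of them share an endpoint with s or t.
   Their eight endpoints are distinct and s, t are not in D(uv,xy), so s and t join the endpoints
   of uv and xy to those of e_l and e_r. Let F and G vanish on the lines of the two diagonals and be
   positive on the quadrant L. As the midpoint of uv lies in neither quadrant, F and G weakly
   separate uv from xy in opposite directions, while both are positive on e_l and negative on e_r;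
   so one of them strictly separates s from t, a contradiction. *)

theory Submission
  imports Defs
begin

lemma segs_eq_2_subsets: "segs P = {A. A \<subseteq> P \<and> card A = 2}"
  unfolding segs_def card_2_iff by blast

lemma doubleton_in_segs_iff: "{a, b} \<in> segs P \<longleftrightarrow> a \<in> P \<and> b \<in> P \<and> a \<noteq> b"
  unfolding segs_eq_2_subsets by (cases "a = b") simp_all

lemma finite_segs: "finite P \<Longrightarrow> finite (segs P)"
  unfolding segs_eq_2_subsets by (rule finite_subset[of _ "Pow P"]) auto

lemma card_segs: "finite P \<Longrightarrow> card (segs P) = card P choose 2"
  unfolding segs_eq_2_subsets by (rule n_subsets)

lemma Dset_subset_segs:
  assumes "{u, v} \<in> segs P" "{x, y} \<in> segs P" "{u, v} \<inter> {x, y} = {}"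
  shows "Dset u v x y \<subseteq> segs P"
  using assms by (auto simp: Dset_def doubleton_in_segs_iff)

lemma doubleton_in_Dset: "a \<in> {u, v} \<Longrightarrow> b \<in> {x, y} \<Longrightarrow> {a, b} \<in> Dset u v x y"
  unfolding Dset_def by (elim insertE emptyE) simp_all

lemma seg_disjoint_commute: "seg_disjoint s t \<longleftrightarrow> seg_disjoint t s"
  by (auto simp: seg_disjoint_def)

lemma seg_disjoint_imp_disjoint: "seg_disjoint s t \<Longrightarrow> s \<inter> t = {}"
  using hull_subset[of s convex] hull_subset[of t convex] by (auto simp: seg_disjoint_def)

lemma seg_disjoint_if_pair_eq: "{s, t} = {A, B} \<Longrightarrow> seg_disjoint A B \<Longrightarrow> seg_disjoint s t"
  by (auto simp: doubleton_eq_iff seg_disjoint_commute)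

section \<open>Separating lines of a good-2-set\<close>

lemma cr_midpoint: "cr d (midpoint p q - c) = (cr d (p - c) + cr d (q - c)) / 2"
  by (simp add: cr_def midpoint_def field_simps)

lemma cr_eq_inner: "cr d (p - a) = (- snd d, fst d) \<bullet> p - (- snd d, fst d) \<bullet> a"
  by (simp add: cr_def inner_prod_def algebra_simps)

lemma midpoint_in_seg_interior: "p \<noteq> q \<Longrightarrow> midpoint p q \<in> seg_interior {p, q}"
  by (simp add: seg_interior_def segment_convex_hull[symmetric])

lemma convex_hulls_disjoint_if_separated:
  fixes h :: "'a::real_vector \<Rightarrow> real"
  assumes affine: "\<And>p q t. h ((1 - t) *\<^sub>R p + t *\<^sub>R q) = (1 - t) * h p + t * h q"
    and "0 \<le> h a" "0 < h l" "h b \<le> 0" "h r < 0" "a \<noteq> b"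
  shows "convex hull {a, l} \<inter> convex hull {b, r} = {}"
proof (rule ccontr)
  assume "convex hull {a, l} \<inter> convex hull {b, r} \<noteq> {}"
  then obtain t t' where t: "0 \<le> t" "t \<le> 1" and t': "0 \<le> t'" "t' \<le> 1"
    and z: "(1 - t) *\<^sub>R a + t *\<^sub>R l = (1 - t') *\<^sub>R b + t' *\<^sub>R r"
    by (auto simp: segment_convex_hull[symmetric] closed_segment_def)
  have "(1 - t) * h a + t * h l = (1 - t') * h b + t' * h r"
    using arg_cong[OF z, of h] by (simp only: affine)
  moreover have "0 \<le> (1 - t) * h a" "(1 - t') * h b \<le> 0"
    using t t' assms by (simp_all add: mult_nonneg_nonpos)
  moreover have "0 \<le> t * h l" "t' * h r \<le> 0"
    using t t' assms by (simp_all add: mult_nonneg_nonpos)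
  ultimately have "t * h l = 0" "t' * h r = 0" by linarith+
  then have "t = 0" "t' = 0" using assms by simp_all
  then show False using z \<open>a \<noteq> b\<close> by simp
qed

lemma interior_convex_hull_has_point_above:
  fixes z w :: "'a::euclidean_space"
  assumes "z \<in> interior (convex hull S)" "w \<noteq> 0"
  shows "\<exists>p\<in>S. w \<bullet> z < w \<bullet> p"
proof (rule ccontr)
  assume "\<not> ?thesis"
  then have "convex hull S \<subseteq> {p. w \<bullet> p \<le> w \<bullet> z}"
    by (intro hull_minimal convex_halfspace_le) (auto simp: not_less)
  then have "interior (convex hull S) \<subseteq> {p. w \<bullet> p < w \<bullet> z}"
    using interior_mono interior_halfspace_le[OF \<open>w \<noteq> 0\<close>] by blast
  then show False using assms(1) by auto
qed

lemma is_diag_endpoints: "is_diag u v x y d \<Longrightarrow> \<exists>a\<in>{u, v}. \<exists>b\<in>{x, y}. d = {a, b}"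
  by (auto simp: is_diag_def)

lemma is_diag_line_has_both_sides:
  assumes "is_diag u v x y {a, b}" "a \<noteq> b"
  shows "\<exists>p\<in>{u, v, x, y}. 0 < cr (b - a) (p - a)" "\<exists>p\<in>{u, v, x, y}. cr (b - a) (p - a) < 0"
proof -
  define w where "w = (- snd (b - a), fst (b - a))"
  have w: "w \<noteq> 0" using assms(2) by (auto simp: w_def prod_eq_iff)
  have m: "midpoint a b \<in> interior (convex hull {u, v, x, y})"
    using assms midpoint_in_seg_interior unfolding is_diag_def by blast
  have "cr (b - a) (midpoint a b - a) = 0"
    by (simp only: cr_midpoint) (simp add: cr_def)
  then have cr_w: "cr (b - a) (p - a) = w \<bullet> p - w \<bullet> midpoint a b" for p
    using cr_eq_inner[of "b - a" p a] cr_eq_inner[of "b - a" "midpoint a b" a] by (simp add: w_def)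
  show "\<exists>p\<in>{u, v, x, y}. 0 < cr (b - a) (p - a)"
    using interior_convex_hull_has_point_above[OF m w] by (auto simp: cr_w)
  show "\<exists>p\<in>{u, v, x, y}. cr (b - a) (p - a) < 0"
    using interior_convex_hull_has_point_above[OF m, of "- w"] w by (auto simp: cr_w)
qed

lemma vanishing_at_endpoints_weakly_separates:
  fixes F :: "'a \<Rightarrow> real"
  assumes "a \<in> {u, v}" "b \<in> {x, y}" "F a = 0" "F b = 0"
    and "\<exists>p\<in>{u, v, x, y}. 0 < F p" "\<exists>p\<in>{u, v, x, y}. F p < 0"
  shows "(0 < F u + F v \<and> (\<forall>p\<in>{u, v}. 0 \<le> F p) \<and> (\<forall>q\<in>{x, y}. F q \<le> 0)) \<or>
         (F u + F v < 0 \<and> (\<forall>p\<in>{u, v}. F p \<le> 0) \<and> (\<forall>q\<in>{x, y}. 0 \<le> F q))"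
proof -
  obtain a' b' where uv: "{u, v} = {a, a'}" and xy: "{x, y} = {b, b'}"
    using assms(1,2) by blast
  have "F u + F v = F a'"
    using uv \<open>F a = 0\<close> by (auto simp: doubleton_eq_iff)
  moreover have "(0 < F a' \<and> F b' < 0) \<or> (F a' < 0 \<and> 0 < F b')"
    using assms(3-6) uv xy by (smt (verit) insert_commute insert_iff empty_iff)
  ultimately show ?thesis
    using uv xy assms(3,4) by (smt (verit) insert_iff empty_iff)
qed

lemma weak_separators_in_opposite_directions:
  fixes F G :: "'a \<Rightarrow> real"
  assumes "a \<in> {u, v}" "b \<in> {x, y}" "F a = 0" "F b = 0"
    and "\<exists>p\<in>{u, v, x, y}. 0 < F p" "\<exists>p\<in>{u, v, x, y}. F p < 0"
    and "c \<in> {u, v}" "e \<in> {x, y}" "G c = 0" "G e = 0"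
    and "\<exists>p\<in>{u, v, x, y}. 0 < G p" "\<exists>p\<in>{u, v, x, y}. G p < 0"
    and "\<not> (0 < F u + F v \<and> 0 < G u + G v)" "\<not> (F u + F v < 0 \<and> G u + G v < 0)"
  obtains H1 H2 where "H1 \<in> {F, G}" "H2 \<in> {F, G}"
    "\<forall>p\<in>{u, v}. 0 \<le> H1 p \<and> H2 p \<le> 0" "\<forall>q\<in>{x, y}. H1 q \<le> 0 \<and> 0 \<le> H2 q"
proof -
  note F = vanishing_at_endpoints_weakly_separates[OF assms(1-6)]
  note G = vanishing_at_endpoints_weakly_separates[OF assms(7-12)]
  from F G assms(13,14) show ?thesis
  proof (elim disjE conjE)
    assume "\<forall>p\<in>{u, v}. 0 \<le> F p" "\<forall>q\<in>{x, y}. F q \<le> 0"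
      "\<forall>p\<in>{u, v}. G p \<le> 0" "\<forall>q\<in>{x, y}. 0 \<le> G q"
    then show ?thesis by (intro that[of F G]) auto
  next
    assume "\<forall>p\<in>{u, v}. F p \<le> 0" "\<forall>q\<in>{x, y}. 0 \<le> F q"
      "\<forall>p\<in>{u, v}. 0 \<le> G p" "\<forall>q\<in>{x, y}. G q \<le> 0"
    then show ?thesis by (intro that[of G F]) auto
  qed linarith+
qed

lemma good2set_weak_separators:
  assumes "good2set P u v x y"
  obtains el er H1 H2 where "el \<in> segs P" "er \<in> segs P"
    "\<forall>t\<in>segs P - Dset u v x y. \<not> crosses t el" "\<forall>t\<in>segs P - Dset u v x y. \<not> crosses t er"
    "\<And>p q t. H1 ((1 - t) *\<^sub>R p + t *\<^sub>R q) = (1 - t) * H1 p + t * H1 q"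
    "\<And>p q t. H2 ((1 - t) *\<^sub>R p + t *\<^sub>R q) = (1 - t) * H2 p + t * H2 q"
    "\<forall>p\<in>{u, v}. 0 \<le> H1 p \<and> H2 p \<le> 0" "\<forall>q\<in>{x, y}. H1 q \<le> 0 \<and> 0 \<le> H2 q"
    "\<forall>l\<in>el. 0 < H1 l \<and> 0 < H2 l" "\<forall>r\<in>er. H1 r < 0 \<and> H2 r < 0"
proof -
  from assms obtain a b c e s1 s2 el er where
    uv: "{u, v} \<in> segs P"
    and ab: "a \<noteq> b" "is_diag u v x y {a, b}" and ce: "c \<noteq> e" "is_diag u v x y {c, e}"
    and s: "s1 \<in> {-1, 1}" "s2 \<in> {-1, 1}"
    and quad_uv: "quad a b c e s1 s2 \<inter> (seg_interior {u, v} \<union> seg_interior {x, y}) = {}"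
      "quad a b c e (- s1) (- s2) \<inter> (seg_interior {u, v} \<union> seg_interior {x, y}) = {}"
    and el: "el \<in> segs P" "convex hull el \<subseteq> quad a b c e s1 s2"
      "\<forall>t\<in>segs P - Dset u v x y. \<not> crosses t el"
    and er: "er \<in> segs P" "convex hull er \<subseteq> quad a b c e (- s1) (- s2)"
      "\<forall>t\<in>segs P - Dset u v x y. \<not> crosses t er"
    unfolding good2set_def by (elim conjE exE bexE) (rule that; assumption)
  define F where "F p = s1 * cr (b - a) (p - a)" for p
  define G where "G p = s2 * cr (e - c) (p - c)" for p
  have quads: "quad a b c e s1 s2 = {p. 0 < F p \<and> 0 < G p}"
    "quad a b c e (- s1) (- s2) = {p. F p < 0 \<and> G p < 0}"
    by (auto simp: quad_def F_def G_def)
  obtain a' b' where "a' \<in> {u, v}" "b' \<in> {x, y}" "F a' = 0" "F b' = 0"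
    using is_diag_endpoints[OF ab(2)] by (force simp: F_def cr_def doubleton_eq_iff)
  moreover have "\<exists>p\<in>{u, v, x, y}. 0 < F p" "\<exists>p\<in>{u, v, x, y}. F p < 0"
    using is_diag_line_has_both_sides[OF ab(2,1)] s(1) by (auto simp: F_def)
  moreover obtain c' e' where "c' \<in> {u, v}" "e' \<in> {x, y}" "G c' = 0" "G e' = 0"
    using is_diag_endpoints[OF ce(2)] by (force simp: G_def cr_def doubleton_eq_iff)
  moreover have "\<exists>p\<in>{u, v, x, y}. 0 < G p" "\<exists>p\<in>{u, v, x, y}. G p < 0"
    using is_diag_line_has_both_sides[OF ce(2,1)] s(2) by (auto simp: G_def)
  moreover have "u \<noteq> v" using uv by (simp add: doubleton_in_segs_iff)
  then have "midpoint u v \<notin> quad a b c e s1 s2" "midpoint u v \<notin> quad a b c e (- s1) (- s2)"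
    using quad_uv midpoint_in_seg_interior by blast+
  then have "\<not> (0 < F u + F v \<and> 0 < G u + G v)" "\<not> (F u + F v < 0 \<and> G u + G v < 0)"
    unfolding quads by (simp_all add: F_def G_def cr_midpoint field_simps)
  ultimately obtain H1 H2 where H: "H1 \<in> {F, G}" "H2 \<in> {F, G}"
    and sides: "\<forall>p\<in>{u, v}. 0 \<le> H1 p \<and> H2 p \<le> 0" "\<forall>q\<in>{x, y}. H1 q \<le> 0 \<and> 0 \<le> H2 q"
    by (rule weak_separators_in_opposite_directions)
  have affine: "H ((1 - t) *\<^sub>R p + t *\<^sub>R q) = (1 - t) * H p + t * H q" if "H \<in> {F, G}" for H p q t
    using that by (auto simp: F_def G_def cr_def algebra_simps)
  have "\<forall>l\<in>el. 0 < H1 l \<and> 0 < H2 l" "\<forall>r\<in>er. H1 r < 0 \<and> H2 r < 0"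
    using el(2) er(2) H hull_subset[of el convex] hull_subset[of er convex] unfolding quads by auto
  then show ?thesis
    by (rule that[OF el(1) er(1) el(3) er(3) affine[OF H(1)] affine[OF H(2)] sides])
qed

lemma good2set_joins_disjoint:
  assumes "good2set P u v x y"
  obtains el er where "el \<in> segs P" "er \<in> segs P"
    "\<forall>t\<in>segs P - Dset u v x y. \<not> crosses t el" "\<forall>t\<in>segs P - Dset u v x y. \<not> crosses t er"
    "{u, v} \<inter> el = {}" "{u, v} \<inter> er = {}" "{x, y} \<inter> el = {}" "{x, y} \<inter> er = {}" "el \<inter> er = {}"
    "\<And>a b l r. a \<in> {u, v} \<Longrightarrow> b \<in> {x, y} \<Longrightarrow> l \<in> el \<Longrightarrow> r \<in> er \<Longrightarrow>
       seg_disjoint {a, l} {b, r} \<and> seg_disjoint {a, r} {b, l}"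
proof -
  obtain el er H1 H2 where el: "el \<in> segs P" and er: "er \<in> segs P"
    and el_uncrossed: "\<forall>t\<in>segs P - Dset u v x y. \<not> crosses t el"
    and er_uncrossed: "\<forall>t\<in>segs P - Dset u v x y. \<not> crosses t er"
    and affine: "\<And>p q t. H1 ((1 - t) *\<^sub>R p + t *\<^sub>R q) = (1 - t) * H1 p + t * H1 q"
      "\<And>p q t. H2 ((1 - t) *\<^sub>R p + t *\<^sub>R q) = (1 - t) * H2 p + t * H2 q"
    and uv_side: "\<forall>p\<in>{u, v}. 0 \<le> H1 p \<and> H2 p \<le> 0"
    and xy_side: "\<forall>q\<in>{x, y}. H1 q \<le> 0 \<and> 0 \<le> H2 q"
    and l: "\<forall>l\<in>el. 0 < H1 l \<and> 0 < H2 l" and r: "\<forall>r\<in>er. H1 r < 0 \<and> H2 r < 0"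
    by (fact good2set_weak_separators[OF assms])
  have "{u, v} \<inter> {x, y} = {}"
    using assms seg_disjoint_imp_disjoint by (simp add: good2set_def)
  show ?thesis
  proof (rule that[OF el er el_uncrossed er_uncrossed])
    show "{u, v} \<inter> el = {}" "{u, v} \<inter> er = {}" "{x, y} \<inter> el = {}" "{x, y} \<inter> er = {}" "el \<inter> er = {}"
      using l r uv_side xy_side by fastforce+
    fix a b l r assume "a \<in> {u, v}" "b \<in> {x, y}" "l \<in> el" "r \<in> er"
    then show "seg_disjoint {a, l} {b, r} \<and> seg_disjoint {a, r} {b, l}"
      using convex_hulls_disjoint_if_separated[OF affine(1), of a l b r]
        convex_hulls_disjoint_if_separated[OF affine(2), of b l a r]
        \<open>l \<in> el\<close> \<open>r \<in> er\<close> l r uv_side xy_side \<open>{u, v} \<inter> {x, y} = {}\<close>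
      by (auto simp: seg_disjoint_def Int_commute)
  qed
qed

section \<open>Segments in general position\<close>

lemma collinear_if_in_convex_hull_2: "z \<in> convex hull {p, q} \<Longrightarrow> collinear {p, q, z}"
  using convex_hull_subset_affine_hull affine_hull_3_imp_collinear by blast

lemma convex_hulls_2_meet_at_most_once:
  fixes p q p' q' :: "'a::euclidean_space"
  assumes "p \<noteq> q" "p' \<noteq> q'" "\<not> collinear {p, q, p'}"
    and "z \<in> convex hull {p, q}" "z \<in> convex hull {p', q'}"
    and "z' \<in> convex hull {p, q}" "z' \<in> convex hull {p', q'}"
  shows "z' = z"
proof (rule ccontr)
  assume "z' \<noteq> z"
  have "collinear {p, q, z, z'}" "collinear {p', q', z, z'}"
    using assms collinear_if_in_convex_hull_2 collinear_4_3 by metis+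
  then have "collinear {z, z', p}" "collinear {z, z', q}" "collinear {z, z', p'}"
    by (auto elim: collinear_subset)
  then have "collinear (insert z (insert z' {p, q, p'}))"
    using collinear_triples[OF \<open>z' \<noteq> z\<close>[symmetric], of "{p, q, p'}"] by simp
  then have "collinear {p, q, p'}"
    by (rule collinear_subset) auto
  with assms(3) show False ..
qed

lemma gen_pos_intersecting_segments_cross:
  assumes gp: "gen_pos P" and "s \<in> segs P" "w \<in> segs P" "s \<inter> w = {}" "\<not> seg_disjoint s w"
  shows "crosses s w"
proof -
  obtain p q where s: "s = {p, q}" and pq: "p \<in> P" "q \<in> P"
    using assms(2) unfolding segs_def by blast
  obtain p' q' where w: "w = {p', q'}" and pq': "p' \<in> P" "q' \<in> P"
    using assms(3) unfolding segs_def by blast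
  have "distinct [p, q, p', q']"
    using assms(2-4) unfolding s w by (auto simp: doubleton_in_segs_iff)
  have ncP: "\<not> collinear {a, b, c}" if "a \<in> P" "b \<in> P" "c \<in> P" "distinct [a, b, c]" for a b c
    using gp that unfolding gen_pos_def distinct.simps list.set by blast
  have nc: "\<not> collinear {p, q, p'}" "\<not> collinear {p, q, q'}"
    "\<not> collinear {p', q', p}" "\<not> collinear {p', q', q}"
    using ncP[of p q p'] ncP[of p q q'] ncP[of p' q' p] ncP[of p' q' q] pq pq' \<open>distinct [p, q, p', q']\<close>
      by (simp_all add: eq_commute)
  then have endpoints: "p \<notin> convex hull w" "q \<notin> convex hull w"
    "p' \<notin> convex hull s" "q' \<notin> convex hull s"
    unfolding s w using collinear_if_in_convex_hull_2 by blast+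
  obtain z where z: "z \<in> convex hull s" "z \<in> convex hull w"
    using assms(5) by (auto simp: seg_disjoint_def)
  have "z' = z" if "z' \<in> convex hull s" "z' \<in> convex hull w" for z'
    using convex_hulls_2_meet_at_most_once[of p q p' q' z z'] nc(1) z that \<open>distinct [p, q, p', q']\<close>
    unfolding s w by simp
  then have "convex hull s \<inter> convex hull w = {z}"
    using z by blast
  moreover have "z \<notin> s" "z \<notin> w"
    using z endpoints unfolding s w by blast+
  ultimately show ?thesis
    unfolding crosses_def by blast
qed

lemma pairs_partitioning_four:
  assumes "distinct [a, b, l, r]" "s \<union> t = {a, b, l, r}" "s \<inter> t = {}" "card s = 2" "card t = 2"
  shows "{s, t} = {{a, l}, {b, r}} \<or> {s, t} = {{a, r}, {b, l}} \<or> {s, t} = {{a, b}, {l, r}}"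
proof -
  have part: "t = {a, b, l, r} - s" "s = {a, b, l, r} - t"
    using assms(2,3) by blast+
  have "\<exists>S T. {s, t} = {S, T} \<and> a \<in> S \<and> card S = 2 \<and> T = {a, b, l, r} - S"
  proof (cases "a \<in> s")
    case True
    then show ?thesis using part(1) assms(4) by blast
  next
    case False
    then have "a \<in> t" using assms(2) by blast
    then show ?thesis using part(2) assms(5) by (metis insert_commute)
  qed
  then obtain S T where ST: "{s, t} = {S, T}" "a \<in> S" "card S = 2" and T: "T = {a, b, l, r} - S"
    by blast
  then obtain z where z: "S = {a, z}" "z \<noteq> a"
    by (metis card_2_iff insert_commute insertE singletonD)
  have "S \<subseteq> {a, b, l, r}" using ST assms(2) by (auto simp: doubleton_eq_iff)
  then have "z = b \<or> z = l \<or> z = r" using z by auto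
  moreover have "{a, b, l, r} - {a, b} = {l, r}" "{a, b, l, r} - {a, l} = {b, r}"
    "{a, b, l, r} - {a, r} = {b, l}"
    using assms(1) by auto
  ultimately have "{S, T} = {{a, b}, {l, r}} \<or> {S, T} = {{a, l}, {b, r}} \<or> {S, T} = {{a, r}, {b, l}}"
    using T z(1) by (elim disjE) simp_all
  with ST(1) show ?thesis by metis
qed

lemma pairs_meeting_four_disjoint_sets:
  assumes "card s = 2" "card t = 2"
    and "A \<inter> (s \<union> t) \<noteq> {}" "B \<inter> (s \<union> t) \<noteq> {}" "L \<inter> (s \<union> t) \<noteq> {}" "R \<inter> (s \<union> t) \<noteq> {}"
    and "A \<inter> B = {}" "A \<inter> L = {}" "A \<inter> R = {}" "B \<inter> L = {}" "B \<inter> R = {}" "L \<inter> R = {}"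
  obtains a b l r where "a \<in> A" "b \<in> B" "l \<in> L" "r \<in> R"
    "{s, t} = {{a, l}, {b, r}} \<or> {s, t} = {{a, r}, {b, l}} \<or> {s, t} = {{a, b}, {l, r}}"
proof -
  obtain a b l r where abl: "a \<in> A" "b \<in> B" "l \<in> L" "r \<in> R"
    and X: "{a, b, l, r} \<subseteq> s \<union> t"
    using assms(3-6) by blast
  have "distinct [a, b, l, r]"
    using abl assms(7-12) by auto
  then have "card {a, b, l, r} = 4" by simp
  moreover have fin: "finite s" "finite t" using assms(1,2) by (simp_all add: card_ge_0_finite)
  moreover have "card (s \<union> t) + card (s \<inter> t) = 4"
    using card_Un_Int[OF fin] assms(1,2) by simp
  moreover have "4 \<le> card (s \<union> t)"
    using card_mono[OF _ X] fin calculation(1) by simp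
  ultimately have "card (s \<union> t) = 4" "card (s \<inter> t) = 0"
    by linarith+
  then have "s \<union> t = {a, b, l, r}" "s \<inter> t = {}"
    using card_subset_eq[OF _ X] fin \<open>card {a, b, l, r} = 4\<close> by simp_all
  then have "{s, t} = {{a, l}, {b, r}} \<or> {s, t} = {{a, r}, {b, l}} \<or> {s, t} = {{a, b}, {l, r}}"
    by (rule pairs_partitioning_four[OF \<open>distinct [a, b, l, r]\<close> _ _ assms(1,2)])
  with abl show ?thesis
    by (rule that)
qed

lemma common_disjoint_of_four_uncrossed:
  assumes gp: "gen_pos P"
    and segs: "{A, B, L, R, s, t} \<subseteq> segs P"
    and apart: "A \<inter> B = {}" "A \<inter> L = {}" "A \<inter> R = {}" "B \<inter> L = {}" "B \<inter> R = {}" "L \<inter> R = {}"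
    and uncrossed: "\<forall>W\<in>{A, B, L, R}. \<not> crosses s W \<and> \<not> crosses t W"
    and joins: "\<And>a b l r. a \<in> A \<Longrightarrow> b \<in> B \<Longrightarrow> l \<in> L \<Longrightarrow> r \<in> R \<Longrightarrow>
       seg_disjoint {a, l} {b, r} \<and> seg_disjoint {a, r} {b, l}"
    and not_AB: "\<And>a b. a \<in> A \<Longrightarrow> b \<in> B \<Longrightarrow> {a, b} \<notin> {s, t}"
    and "\<not> seg_disjoint s t"
  shows "\<exists>W\<in>{A, B, L, R}. seg_disjoint s W \<and> seg_disjoint W t"
proof (rule ccontr)
  assume none: "\<not> ?thesis"
  have meets: "W \<inter> (s \<union> t) \<noteq> {}" if W: "W \<in> {A, B, L, R}" for W
  proof -
    have "\<not> seg_disjoint s W \<or> \<not> seg_disjoint t W"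
      using none W seg_disjoint_commute[of W t] by blast
    moreover have "W \<in> segs P" "s \<in> segs P" "t \<in> segs P"
      using W segs by blast+
    ultimately show ?thesis
      using gen_pos_intersecting_segments_cross[OF gp] uncrossed W by blast
  qed
  have "card s = 2" "card t = 2"
    using segs by (simp_all add: segs_eq_2_subsets)
  moreover have "A \<inter> (s \<union> t) \<noteq> {}" "B \<inter> (s \<union> t) \<noteq> {}" "L \<inter> (s \<union> t) \<noteq> {}" "R \<inter> (s \<union> t) \<noteq> {}"
    by (rule meets; simp)+
  ultimately obtain a b l r where "a \<in> A" "b \<in> B" "l \<in> L" "r \<in> R"
    and cases: "{s, t} = {{a, l}, {b, r}} \<or> {s, t} = {{a, r}, {b, l}} \<or> {s, t} = {{a, b}, {l, r}}"
    by (rule pairs_meeting_four_disjoint_sets[OF _ _ _ _ _ _ apart]) (rule that)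
  moreover have "{s, t} \<noteq> {{a, b}, {l, r}}"
    using not_AB[OF \<open>a \<in> A\<close> \<open>b \<in> B\<close>] by (metis insertI1)
  ultimately have "seg_disjoint s t"
    using joins[OF \<open>a \<in> A\<close> \<open>b \<in> B\<close> \<open>l \<in> L\<close> \<open>r \<in> R\<close>] by (metis seg_disjoint_if_pair_eq)
  with \<open>\<not> seg_disjoint s t\<close> show False ..
qed

lemma good2set_common_disjoint_segment:
  assumes gp: "gen_pos P" and g: "good2set P u v x y"
  obtains S where "S \<subseteq> segs P" "card S \<le> 8"
    "\<And>s t. s \<in> segs P - S \<Longrightarrow> t \<in> segs P - S \<Longrightarrow> \<not> seg_disjoint s t \<Longrightarrow>
       \<exists>w\<in>S. seg_disjoint s w \<and> seg_disjoint w t"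
proof -
  obtain el er where el: "el \<in> segs P" and er: "er \<in> segs P"
    and el_uncrossed: "\<forall>t\<in>segs P - Dset u v x y. \<not> crosses t el"
    and er_uncrossed: "\<forall>t\<in>segs P - Dset u v x y. \<not> crosses t er"
    and apart: "{u, v} \<inter> el = {}" "{u, v} \<inter> er = {}" "{x, y} \<inter> el = {}" "{x, y} \<inter> er = {}" "el \<inter> er = {}"
    and joins: "\<And>a b l r. a \<in> {u, v} \<Longrightarrow> b \<in> {x, y} \<Longrightarrow> l \<in> el \<Longrightarrow> r \<in> er \<Longrightarrow>
       seg_disjoint {a, l} {b, r} \<and> seg_disjoint {a, r} {b, l}"
    by (fact good2set_joins_disjoint[OF g])
  have uv: "{u, v} \<in> segs P" "clean (segs P) {u, v}" and xy: "{x, y} \<in> segs P" "clean (segs P) {x, y}"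
    and uv_xy: "{u, v} \<inter> {x, y} = {}"
    using g seg_disjoint_imp_disjoint by (simp_all add: good2set_def)
  define S where "S = Dset u v x y \<union> {el, er}"
  have Dset: "{u, v} \<in> Dset u v x y" "{x, y} \<in> Dset u v x y"
    by (simp_all add: Dset_def)
  show ?thesis
  proof (rule that)
    show "S \<subseteq> segs P"
      using Dset_subset_segs[OF uv(1) xy(1) uv_xy] el er by (auto simp: S_def)
    show "card S \<le> 8"
      using card_length[of "[{u, v}, {u, x}, {u, y}, {v, x}, {v, y}, {x, y}, el, er]"]
      by (simp add: S_def Dset_def insert_commute)
  next
    fix s t assume s: "s \<in> segs P - S" and t: "t \<in> segs P - S" and st: "\<not> seg_disjoint s t"
    have uncrossed: "\<forall>W\<in>{{u, v}, {x, y}, el, er}. \<not> crosses s W \<and> \<not> crosses t W"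
      using s t uv(2) xy(2) el_uncrossed er_uncrossed Dset unfolding clean_def S_def by auto
    have not_diagonal: "{a, b} \<notin> {s, t}" if "a \<in> {u, v}" "b \<in> {x, y}" for a b
      using doubleton_in_Dset[OF that] s t by (auto simp: S_def)
    have "{{u, v}, {x, y}, el, er, s, t} \<subseteq> segs P"
      using uv(1) xy(1) el er s t by blast
    then have "\<exists>W\<in>{{u, v}, {x, y}, el, er}. seg_disjoint s W \<and> seg_disjoint W t"
      by (rule common_disjoint_of_four_uncrossed[OF gp _ uv_xy apart uncrossed joins not_diagonal st])
    then show "\<exists>w\<in>S. seg_disjoint s w \<and> seg_disjoint w t"
      using Dset by (auto simp: S_def)
  qed
qed

section \<open>Shortest paths and mutual visibility\<close>

lemma walk_length_ge_2:
  assumes "walk V E ys" "hd ys = x" "last ys = y" "x \<noteq> y"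
  shows "2 \<le> length ys"
proof (rule ccontr)
  assume "\<not> 2 \<le> length ys"
  moreover have "length ys \<noteq> 0"
    using assms(1) by (simp add: walk_def)
  ultimately have "length ys = 1"
    by linarith
  then obtain z where "ys = [z]"
    by (metis One_nat_def length_0_conv length_Suc_conv)
  with assms(2-4) show False by simp
qed

lemma walk_length_2_imp_edge:
  assumes "walk V E ys" "hd ys = x" "last ys = y" "length ys = 2"
  shows "E x y"
proof -
  obtain a b where "ys = [a, b]"
    using assms(4) by (metis length_0_conv length_Suc_conv numeral_2_eq_2)
  with assms(1-3) show ?thesis
    unfolding walk_def by force
qed

lemma shortest_path_edge:
  assumes "x \<noteq> y" "E x y" "x \<in> V" "y \<in> V"
  shows "shortest_path V E x y [x, y]"
  unfolding shortest_path_def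
proof (intro conjI allI impI)
  show "walk V E [x, y]"
    using assms unfolding walk_def by (auto simp: less_Suc_eq)
  fix ys assume "walk V E ys \<and> hd ys = x \<and> last ys = y"
  then show "length [x, y] \<le> length ys"
    using walk_length_ge_2 assms(1) by fastforce
qed simp_all

lemma shortest_path_via:
  assumes "x \<noteq> y" "\<not> E x y" "E x w" "E w y" "x \<in> V" "y \<in> V" "w \<in> V"
  shows "shortest_path V E x y [x, w, y]"
  unfolding shortest_path_def
proof (intro conjI allI impI)
  show "walk V E [x, w, y]"
    using assms unfolding walk_def by (auto simp: less_Suc_eq nth_Cons')
  fix ys assume "walk V E ys \<and> hd ys = x \<and> last ys = y"
  then show "length [x, w, y] \<le> length ys"
    using walk_length_ge_2[of V E ys x y] walk_length_2_imp_edge[of V E ys x y] assms(1,2)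
    by fastforce
qed simp_all

lemma mv_set_if_common_neighbour_outside:
  assumes "U \<subseteq> V"
    and "\<And>x y. x \<in> U \<Longrightarrow> y \<in> U \<Longrightarrow> x \<noteq> y \<Longrightarrow> \<not> E x y \<Longrightarrow> \<exists>w\<in>V - U. E x w \<and> E w y"
  shows "mv_set V E U"
  unfolding mv_set_def mutually_visible_def
proof (intro conjI ballI impI)
  fix x y assume "x \<in> U" "y \<in> U" "x \<noteq> y"
  then have "x \<in> V" "y \<in> V" using assms(1) by blast+
  show "\<exists>xs. shortest_path V E x y xs \<and> set (butlast (tl xs)) \<inter> U = {}"
  proof (cases "E x y")
    case True
    with \<open>x \<noteq> y\<close> \<open>x \<in> V\<close> \<open>y \<in> V\<close> have "shortest_path V E x y [x, y]"
      by (intro shortest_path_edge)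
    then show ?thesis by (intro exI[of _ "[x, y]"]) simp
  next
    case False
    then obtain w where "w \<in> V" "w \<notin> U" "E x w" "E w y"
      using assms(2) \<open>x \<in> U\<close> \<open>y \<in> U\<close> \<open>x \<noteq> y\<close> by blast
    with \<open>x \<noteq> y\<close> \<open>x \<in> V\<close> \<open>y \<in> V\<close> False have "shortest_path V E x y [x, w, y]"
      by (intro shortest_path_via)
    with \<open>w \<notin> U\<close> show ?thesis by (intro exI[of _ "[x, w, y]"]) simp
  qed
qed (rule assms(1))

lemma card_le_mu:
  assumes "finite V" "mv_set V E U"
  shows "card U \<le> mu V E"
proof -
  have "{U. mv_set V E U} \<subseteq> Pow V"
    by (auto simp: mv_set_def)
  then have "finite {U. mv_set V E U}"
    using assms(1) by (simp add: finite_subset)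
  with assms(2) show ?thesis
    unfolding mu_def by (intro Max_ge) auto
qed

theorem proposition13:
  fixes P :: "(real \<times> real) set" and n :: nat
  assumes "finite P" and "card P = n" and "n \<ge> 5" and "gen_pos P"
    and "\<exists>u v x y. good2set P u v x y"
  shows "mu (segs P) seg_disjoint \<ge> (n choose 2) - 8"
proof -
  obtain u v x y where "good2set P u v x y"
    using assms(5) by blast
  then obtain S where S: "S \<subseteq> segs P" "card S \<le> 8"
    and joined: "\<And>s t. s \<in> segs P - S \<Longrightarrow> t \<in> segs P - S \<Longrightarrow> \<not> seg_disjoint s t \<Longrightarrow>
       \<exists>w\<in>S. seg_disjoint s w \<and> seg_disjoint w t"
    by (rule good2set_common_disjoint_segment[OF assms(4)]) (rule that)
  have fin: "finite (segs P)"
    using assms(1) by (rule finite_segs)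
  have "mv_set (segs P) seg_disjoint (segs P - S)"
  proof (rule mv_set_if_common_neighbour_outside)
    fix s t assume "s \<in> segs P - S" "t \<in> segs P - S" "\<not> seg_disjoint s t"
    then show "\<exists>w\<in>segs P - (segs P - S). seg_disjoint s w \<and> seg_disjoint w t"
      using joined S(1) by (metis Diff_Diff_Int inf.absorb_iff2)
  qed blast
  then have "card (segs P - S) \<le> mu (segs P) seg_disjoint"
    by (rule card_le_mu[OF fin])
  moreover have "card (segs P - S) = (n choose 2) - card S"
    using card_Diff_subset[OF finite_subset[OF S(1) fin] S(1)] card_segs[OF assms(1)] assms(2) by simp
  ultimately show ?thesis
    using S(2) by linarith
qed

end
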